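(* Let $m\ge 2$, let $A\in\mathbb{R}^{m\times m}$ be a symmetric matrix with zero diagonal and nonnegative entries, and let $k\in\{1,\ldots,\lfloor m/2\rfloor\}$. Let $A_k$ be the $(2m-2k)\times(2m-2k)$ symmetric matrix with zero diagonal given in block form by \[ A_k:=\begin{bmatrix} A & \mathbf{1}_{m,m-2k}\\ \mathbf{1}_{m-2k,m} & \mathbf{0}\end{bmatrix}, \] where $\mathbf{1}_{p,q}$ is the $p\times q$ matrix all of whose entries equal $1$ and $\mathbf{0}$ is the $(m-2k)\times(m-2k)$ zero matrix. Then \[ \mathrm{haf}_k A=\frac{\mathrm{haf}\, A_k}{(m-2k)!}. \]
   Context: For a real symmetric $2n\times 2n$ matrix $C=[c_{ij}]$, let $\mathcal{M}(K_{2n})$ be the set of perfect matchings of the complete graph on $\{1,\ldots,2n\}$, each written as $\{(i_1,j_1),\ldots,(i_n,j_n)\}$ with $i_l<j_l$; the hafnian is $\mathrm{haf}\, C:=\sum_{\{(i_1,j_1),\ldots,(i_n,j_n)\}\in\mathcal{M}(K_{2n})}\prod_{l=1}^n c_{i_lj_l}$ (and $\mathrm{haf}$ of the empty $0\times 0$ matrix is $1$). For $1\le 2k\le m$, $Q_{2k,m}$ is the set of $2k$-element subsets $\alpha=\{\alpha_1<\cdots<\alpha_{2k}\}$ of $\{1,\ldots,m\}$, $A[\alpha,\alpha]:=[a_{\alpha_i\alpha_j}]_{i,j=1}^{2k}$, and $\mathrm{haf}_k A:=\sum_{\alpha\in Q_{2k,m}}\mathrm{haf}\, A[\alpha,\alpha]$.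 *)

theory Defs
  imports Complex_Main
begin

text \<open>Matrices are functions nat => nat => real, indexed from 1; the size is carried explicitly.\<close>

definition perfect_matchings :: "nat set \<Rightarrow> (nat \<times> nat) set set" where
  "perfect_matchings S =
     {M. M \<subseteq> {(i, j). i \<in> S \<and> j \<in> S \<and> i < j} \<and>
         (\<forall>x\<in>S. \<exists>!p. p \<in> M \<and> (fst p = x \<or> snd p = x))}"

definition haf :: "nat \<Rightarrow> (nat \<Rightarrow> nat \<Rightarrow> real) \<Rightarrow> real" where
  "haf n C = (\<Sum>M\<in>perfect_matchings {1..n}. \<Prod>p\<in>M. C (fst p) (snd p))"

definition principal_submatrix :: "(nat \<Rightarrow> nat \<Rightarrow> real) \<Rightarrow> nat set \<Rightarrow> nat \<Rightarrow> nat \<Rightarrow> real" where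
  "principal_submatrix A \<alpha> i j =
     A (sorted_list_of_set \<alpha> ! (i - 1)) (sorted_list_of_set \<alpha> ! (j - 1))"

definition Q_sets :: "nat \<Rightarrow> nat \<Rightarrow> nat set set" where
  "Q_sets r m = {\<alpha>. \<alpha> \<subseteq> {1..m} \<and> card \<alpha> = r}"

definition haf_k :: "nat \<Rightarrow> nat \<Rightarrow> (nat \<Rightarrow> nat \<Rightarrow> real) \<Rightarrow> real" where
  "haf_k m k A = (\<Sum>\<alpha>\<in>Q_sets (2 * k) m. haf (2 * k) (principal_submatrix A \<alpha>))"

definition block_Ak :: "nat \<Rightarrow> (nat \<Rightarrow> nat \<Rightarrow> real) \<Rightarrow> nat \<Rightarrow> nat \<Rightarrow> real" where
  "block_Ak m A i j =
     (if i \<le> m \<and> j \<le> m then A i j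
      else if i \<le> m \<or> j \<le> m then 1 else 0)"

end

theory Submission
  imports Defs
begin

text \<open>
  Expanding a hafnian along its largest index x gives
  \<open>haf S = (\<Sum>j\<in>S-{x}. c\<^sub>j\<^sub>x haf (S-{j,x}))\<close>. Apply this to \<open>A\<^sub>k\<close> restricted to
  \<open>U \<union> W\<close>, with U a set of original and W a set of added indices, and x the largest added index:
  x is joined with weight 1 to each \<open>j \<in> U\<close> and with weight 0 to the other added indices. By
  induction on |W|, \<open>haf (U \<union> W)\<close> is then |W|! times the sum of \<open>haf \<alpha>\<close> over the subsets
  \<open>\<alpha> \<subseteq> U\<close> of size |U| - |W|, since such an \<open>\<alpha>\<close> arises from exactly |U - \<alpha>| = |W| choices of j.
  Because hafnians are invariant under order-preserving relabelling of the indices, the sum is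
  \<open>haf\<^sub>k A\<close> when U = {1..m} and |W| = m - 2k.
\<close>

text \<open>The hafnian of the principal submatrix \<open>C[S,S]\<close>, with indices kept rather than renumbered.\<close>

definition haf_on :: "(nat \<Rightarrow> nat \<Rightarrow> 'a::comm_semiring_1) \<Rightarrow> nat set \<Rightarrow> 'a" where
  "haf_on C S = (\<Sum>M\<in>perfect_matchings S. \<Prod>p\<in>M. C (fst p) (snd p))"

lemma haf_eq_haf_on: "haf n C = haf_on C {1..n}"
  by (simp add: haf_def haf_on_def)

lemma perfect_matchingsI:
  assumes "M \<subseteq> {(i, j). i \<in> S \<and> j \<in> S \<and> i < j}"
    and "\<And>y. y \<in> S \<Longrightarrow> \<exists>p\<in>M. fst p = y \<or> snd p = y"
    and "\<And>p q. p \<in> M \<Longrightarrow> q \<in> M \<Longrightarrow> p \<noteq> q \<Longrightarrow> {fst p, snd p} \<inter> {fst q, snd q} = {}"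
  shows "M \<in> perfect_matchings S"
  unfolding perfect_matchings_def
proof (intro CollectI conjI assms(1) ballI)
  fix y assume "y \<in> S"
  then obtain p where p: "p \<in> M" "fst p = y \<or> snd p = y" using assms(2) by blast
  show "\<exists>!p. p \<in> M \<and> (fst p = y \<or> snd p = y)"
  proof (rule ex1I[of _ p])
    fix q assume q: "q \<in> M \<and> (fst q = y \<or> snd q = y)"
    show "q = p"
    proof (rule ccontr)
      assume "q \<noteq> p"
      then have "{fst q, snd q} \<inter> {fst p, snd p} = {}" using assms(3) q p(1) by blast
      then show False using p(2) q by auto
    qed
  qed (use p in blast)
qed

lemma perfect_matching_edge:
  "M \<in> perfect_matchings S \<Longrightarrow> (i, j) \<in> M \<Longrightarrow> i \<in> S \<and> j \<in> S \<and> i < j"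
  unfolding perfect_matchings_def by blast

lemma perfect_matching_covers:
  "M \<in> perfect_matchings S \<Longrightarrow> y \<in> S \<Longrightarrow> \<exists>p\<in>M. fst p = y \<or> snd p = y"
  unfolding perfect_matchings_def by blast

lemma perfect_matching_edges_disjoint:
  assumes M: "M \<in> perfect_matchings S" and "p \<in> M" "q \<in> M" "p \<noteq> q"
  shows "{fst p, snd p} \<inter> {fst q, snd q} = {}"
proof (rule ccontr)
  assume "{fst p, snd p} \<inter> {fst q, snd q} \<noteq> {}"
  then obtain y where y: "fst p = y \<or> snd p = y" "fst q = y \<or> snd q = y" by blast
  have "y \<in> S" using y(1) perfect_matching_edge[OF M, of "fst p" "snd p"] \<open>p \<in> M\<close> by auto
  then obtain r where "\<forall>s. s \<in> M \<and> (fst s = y \<or> snd s = y) \<longrightarrow> s = r"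
    using M unfolding perfect_matchings_def by blast
  then have "p = r" "q = r" using y assms(2,3) by blast+
  with \<open>p \<noteq> q\<close> show False by simp
qed

lemma perfect_matching_subset: "M \<in> perfect_matchings S \<Longrightarrow> M \<subseteq> S \<times> S"
  by (auto dest: perfect_matching_edge)

lemma finite_perfect_matchings: "finite S \<Longrightarrow> finite (perfect_matchings S)"
  by (rule finite_subset[of _ "Pow (S \<times> S)"]) (auto dest: perfect_matching_subset)

lemma perfect_matching_Diff_edge:
  assumes M: "M \<in> perfect_matchings S" and e: "(j, x) \<in> M"
  shows "M - {(j, x)} \<in> perfect_matchings (S - {j, x})"
proof (rule perfect_matchingsI)
  have "{a, b} \<inter> {j, x} = {}" if "(a, b) \<in> M - {(j, x)}" for a b
    using that perfect_matching_edges_disjoint[OF M _ e, of "(a, b)"] by simp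
  then show "M - {(j, x)} \<subseteq> {(a, b). a \<in> S - {j, x} \<and> b \<in> S - {j, x} \<and> a < b}"
    using perfect_matching_edge[OF M] by blast
next
  fix y assume "y \<in> S - {j, x}"
  then show "\<exists>p\<in>M - {(j, x)}. fst p = y \<or> snd p = y"
    using perfect_matching_covers[OF M, of y] by force
qed (use perfect_matching_edges_disjoint[OF M] in simp)

lemma perfect_matching_insert_edge:
  assumes M: "M \<in> perfect_matchings (S - {j, x})" and "j \<in> S" "x \<in> S" "j < x"
  shows "insert (j, x) M \<in> perfect_matchings S"
proof (rule perfect_matchingsI)
  show "insert (j, x) M \<subseteq> {(a, b). a \<in> S \<and> b \<in> S \<and> a < b}"
    using assms perfect_matching_edge[OF M] by auto
next
  fix y assume "y \<in> S"
  then show "\<exists>p\<in>insert (j, x) M. fst p = y \<or> snd p = y"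
    using perfect_matching_covers[OF M, of y] by (cases "y \<in> {j, x}") auto
next
  fix p q assume p: "p \<in> insert (j, x) M" and q: "q \<in> insert (j, x) M" and "p \<noteq> q"
  have off: "{fst r, snd r} \<inter> {j, x} = {}" if "r \<in> M" for r
    using perfect_matching_edge[OF M, of "fst r" "snd r"] that by auto
  show "{fst p, snd p} \<inter> {fst q, snd q} = {}"
  proof (cases "p \<in> M \<and> q \<in> M")
    case True
    then show ?thesis using perfect_matching_edges_disjoint[OF M _ _ \<open>p \<noteq> q\<close>] by blast
  next
    case False
    then have "p = (j, x) \<and> q \<in> M \<or> q = (j, x) \<and> p \<in> M" using p q \<open>p \<noteq> q\<close> by blast
    then show ?thesis
    proof
      assume "p = (j, x) \<and> q \<in> M"
      then show ?thesis using off[of q] by (metis Int_commute fst_conv snd_conv)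
    next
      assume "q = (j, x) \<and> p \<in> M"
      then show ?thesis using off[of p] by (metis fst_conv snd_conv)
    qed
  qed
qed

lemma perfect_matchings_empty: "perfect_matchings {} = {{}}"
  unfolding perfect_matchings_def by auto

lemma perfect_matchings_split_Max:
  assumes x: "x \<in> S" "\<forall>y\<in>S. y \<le> x"
  shows "perfect_matchings S = (\<Union>j\<in>S - {x}. insert (j, x) ` perfect_matchings (S - {j, x}))"
proof (intro equalityI subsetI)
  fix M assume M: "M \<in> perfect_matchings S"
  obtain a b where ab: "(a, b) \<in> M" "a = x \<or> b = x"
    using perfect_matching_covers[OF M x(1)] by auto
  have "a \<in> S" "a < b" "b \<le> x" using perfect_matching_edge[OF M ab(1)] x(2) by auto
  then have "b = x" "a \<in> S - {x}" using ab(2) by auto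
  moreover have "M = insert (a, x) (M - {(a, x)})" using ab(1) \<open>b = x\<close> by blast
  moreover have "M - {(a, x)} \<in> perfect_matchings (S - {a, x})"
    using perfect_matching_Diff_edge[OF M] ab(1) \<open>b = x\<close> by simp
  ultimately show "M \<in> (\<Union>j\<in>S - {x}. insert (j, x) ` perfect_matchings (S - {j, x}))"
    by blast
next
  fix M assume "M \<in> (\<Union>j\<in>S - {x}. insert (j, x) ` perfect_matchings (S - {j, x}))"
  then obtain j M' where "j \<in> S - {x}" "M' \<in> perfect_matchings (S - {j, x})" "M = insert (j, x) M'"
    by blast
  with x show "M \<in> perfect_matchings S"
    using perfect_matching_insert_edge[of M' S j x] by force
qed

lemma haf_on_empty: "haf_on C {} = 1"
  by (simp add: haf_on_def perfect_matchings_empty)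

lemma haf_on_cong: "(\<And>i j. i \<in> S \<Longrightarrow> j \<in> S \<Longrightarrow> C i j = D i j) \<Longrightarrow> haf_on C S = haf_on D S"
  unfolding haf_on_def by (intro sum.cong prod.cong refl) (metis perfect_matching_edge prod.collapse)

lemma haf_on_expand_Max:
  assumes "finite S" and x: "x \<in> S" "\<forall>y\<in>S. y \<le> x"
  shows "haf_on C S = (\<Sum>j\<in>S - {x}. C j x * haf_on C (S - {j, x}))"
proof -
  let ?w = "\<lambda>M. \<Prod>p\<in>M. C (fst p) (snd p)"
  have not_in: "(i, x) \<notin> M" if "M \<in> perfect_matchings (S - {j, x})" for i j M
    using perfect_matching_subset[OF that] by blast
  have same_edge: "i = j" if "insert (i, x) M = insert (j, x) M'" "M \<in> perfect_matchings (S - {i, x})"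
    for i j M M'
  proof -
    have "(j, x) \<in> insert (i, x) M" using that(1) by simp
    then show ?thesis using not_in[OF that(2), of j] by simp
  qed
  have "haf_on C S = (\<Sum>j\<in>S - {x}. \<Sum>M\<in>insert (j, x) ` perfect_matchings (S - {j, x}). ?w M)"
    unfolding haf_on_def perfect_matchings_split_Max[OF x]
  proof (rule sum.UNION_disjoint)
    show "finite (S - {x})" using \<open>finite S\<close> by simp
    show "\<forall>j\<in>S - {x}. finite (insert (j, x) ` perfect_matchings (S - {j, x}))"
      using \<open>finite S\<close> by (simp add: finite_perfect_matchings)
    show "\<forall>i\<in>S - {x}. \<forall>j\<in>S - {x}. i \<noteq> j \<longrightarrow>
      insert (i, x) ` perfect_matchings (S - {i, x}) \<inter> insert (j, x) ` perfect_matchings (S - {j, x}) = {}"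
      using same_edge by blast
  qed
  also have "\<dots> = (\<Sum>j\<in>S - {x}. \<Sum>M\<in>perfect_matchings (S - {j, x}). C j x * ?w M)"
  proof (rule sum.cong[OF refl])
    fix j assume "j \<in> S - {x}"
    have "inj_on (insert (j, x)) (perfect_matchings (S - {j, x}))"
      using not_in by (intro inj_onI) (metis insert_ident)
    moreover have "?w (insert (j, x) M) = C j x * ?w M" if "M \<in> perfect_matchings (S - {j, x})" for M
      using not_in[OF that] finite_subset[OF perfect_matching_subset[OF that]] \<open>finite S\<close> by simp
    ultimately show "(\<Sum>M\<in>insert (j, x) ` perfect_matchings (S - {j, x}). ?w M)
        = (\<Sum>M\<in>perfect_matchings (S - {j, x}). C j x * ?w M)"
      by (simp add: sum.reindex)
  qed
  finally show ?thesis by (simp add: haf_on_def sum_distrib_left)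
qed

lemma haf_on_reindex:
  assumes "finite S" "strict_mono_on S g"
  shows "haf_on (\<lambda>i j. C (g i) (g j)) S = haf_on C (g ` S)"
  using assms
proof (induction "card S" arbitrary: S rule: less_induct)
  case less
  show ?case
  proof (cases "S = {}")
    case True
    then show ?thesis by (simp add: haf_on_empty)
  next
    case False
    define x where "x = Max S"
    have x: "x \<in> S" "\<forall>y\<in>S. y \<le> x" using less.prems False by (simp_all add: x_def)
    have gx: "g x \<in> g ` S" "\<forall>y\<in>g ` S. y \<le> g x"
      using x strict_mono_on_leD[OF less.prems(2)] by auto
    have inj: "inj_on g S" using less.prems(2) by (rule strict_mono_on_imp_inj_on)
    have image_Diff: "g ` (S - {j, x}) = g ` S - {g j, g x}" if "j \<in> S" for j
      using inj_on_image_set_diff[OF inj, of S "{j, x}"] that x by simp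
    have image_Diff_Max: "g ` (S - {x}) = g ` S - {g x}"
      using inj_on_image_set_diff[OF inj, of S "{x}"] x by simp
    have IH: "haf_on (\<lambda>i j. C (g i) (g j)) (S - {j, x}) = haf_on C (g ` (S - {j, x}))"
      if "j \<in> S - {x}" for j
    proof (rule less.hyps)
      show "card (S - {j, x}) < card S" using that x less.prems(1) by (intro psubset_card_mono) auto
    qed (use less.prems in \<open>auto intro: monotone_on_subset\<close>)
    have "haf_on (\<lambda>i j. C (g i) (g j)) S
        = (\<Sum>j\<in>S - {x}. C (g j) (g x) * haf_on (\<lambda>i j. C (g i) (g j)) (S - {j, x}))"
      by (rule haf_on_expand_Max[OF less.prems(1) x])
    also have "\<dots> = (\<Sum>j\<in>S - {x}. C (g j) (g x) * haf_on C (g ` S - {g j, g x}))"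
      using IH image_Diff by (intro sum.cong refl) simp
    also have "\<dots> = (\<Sum>j'\<in>g ` S - {g x}. C j' (g x) * haf_on C (g ` S - {j', g x}))"
      using inj_on_subset[OF inj] by (simp add: sum.reindex flip: image_Diff_Max)
    also have "\<dots> = haf_on C (g ` S)"
      using haf_on_expand_Max[OF finite_imageI[OF less.prems(1)] gx] by (rule sym)
    finally show ?thesis .
  qed
qed

lemma haf_principal_submatrix:
  assumes "finite \<alpha>"
  shows "haf (card \<alpha>) (principal_submatrix A \<alpha>) = haf_on A \<alpha>"
proof -
  let ?xs = "sorted_list_of_set \<alpha>"
  define g where "g i = ?xs ! (i - 1)" for i
  have "strict_mono_on {1..card \<alpha>} g"
    using sorted_wrt_nth_less[OF strict_sorted_list_of_set[of \<alpha>]]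
    by (auto intro!: monotone_onI simp: g_def)
  moreover have "g ` {1..card \<alpha>} = \<alpha>"
  proof -
    have "g ` {1..card \<alpha>} = g ` Suc ` {..<length ?xs}"
      by (simp add: image_Suc_lessThan)
    also have "\<dots> = (\<lambda>i. ?xs ! i) ` {..<length ?xs}"
      unfolding image_image g_def by simp
    also have "\<dots> = set ?xs" by (auto simp: in_set_conv_nth)
    finally show ?thesis using assms by simp
  qed
  moreover have "principal_submatrix A \<alpha> = (\<lambda>i j. A (g i) (g j))"
    by (intro ext) (simp add: principal_submatrix_def g_def)
  ultimately show ?thesis by (simp add: haf_eq_haf_on haf_on_reindex)
qed

lemma sum_subsets_Diff_singleton:
  fixes f :: "'a set \<Rightarrow> 'b::comm_semiring_1"
  assumes "finite U"
  shows "(\<Sum>j\<in>U. \<Sum>\<alpha> | \<alpha> \<subseteq> U - {j} \<and> card \<alpha> = c. f \<alpha>)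
       = of_nat (card U - c) * (\<Sum>\<alpha> | \<alpha> \<subseteq> U \<and> card \<alpha> = c. f \<alpha>)"
proof -
  let ?Q = "{\<alpha>. \<alpha> \<subseteq> U \<and> card \<alpha> = c}"
  have fin: "finite ?Q" by (rule finite_subset[of _ "Pow U"]) (use assms in auto)
  have "(\<Sum>j\<in>U. \<Sum>\<alpha> | \<alpha> \<subseteq> U - {j} \<and> card \<alpha> = c. f \<alpha>) = (\<Sum>j\<in>U. \<Sum>\<alpha> | \<alpha> \<in> ?Q \<and> j \<notin> \<alpha>. f \<alpha>)"
  proof -
    have "{\<alpha>. \<alpha> \<subseteq> U - {j} \<and> card \<alpha> = c} = {\<alpha>. \<alpha> \<in> ?Q \<and> j \<notin> \<alpha>}" for j
      by blast
    then show ?thesis by simp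
  qed
  also have "\<dots> = (\<Sum>\<alpha>\<in>?Q. \<Sum>j | j \<in> U \<and> j \<notin> \<alpha>. f \<alpha>)"
    by (rule sum.swap_restrict[OF assms fin])
  also have "\<dots> = (\<Sum>\<alpha>\<in>?Q. of_nat (card U - c) * f \<alpha>)"
  proof (rule sum.cong[OF refl])
    fix \<alpha> assume "\<alpha> \<in> ?Q"
    then have "card {j. j \<in> U \<and> j \<notin> \<alpha>} = card U - c"
      using assms card_Diff_subset[of \<alpha> U] finite_subset[of \<alpha> U] by (simp add: set_diff_eq[symmetric])
    then show "(\<Sum>j | j \<in> U \<and> j \<notin> \<alpha>. f \<alpha>) = of_nat (card U - c) * f \<alpha>" by simp
  qed
  finally show ?thesis by (simp add: sum_distrib_left)
qed

lemma haf_on_block_Ak: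
  assumes "finite U" "U \<subseteq> {..m}" "finite W" "W \<subseteq> {m<..}" "card W \<le> card U"
  shows "haf_on (block_Ak m A) (U \<union> W)
       = fact (card W) * (\<Sum>\<alpha> | \<alpha> \<subseteq> U \<and> card \<alpha> = card U - card W. haf_on A \<alpha>)"
  using assms
proof (induction "card W" arbitrary: U W)
  case 0
  then have "W = {}" by simp
  moreover have "{\<alpha>. \<alpha> \<subseteq> U \<and> card \<alpha> = card U} = {U}"
    using \<open>finite U\<close> card_subset_eq by blast
  moreover have "haf_on (block_Ak m A) U = haf_on A U"
    using \<open>U \<subseteq> {..m}\<close> by (intro haf_on_cong) (auto simp: block_Ak_def)
  ultimately show ?case by simp
next
  case (Suc n)
  define w where "w = Max W"
  have "W \<noteq> {}" using Suc.hyps(2) by auto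
  then have "w \<in> W" using Suc.prems(3) by (simp add: w_def)
  then have w: "w \<in> W" "m < w" using Suc.prems(4) by auto
  have w_Max: "\<forall>y\<in>U \<union> W. y \<le> w" using Suc.prems w w_def by fastforce
  have disj: "U \<inter> W = {}" using Suc.prems by fastforce
  let ?B = "block_Ak m A"
  have "haf_on ?B (U \<union> W) = (\<Sum>j\<in>U \<union> W - {w}. ?B j w * haf_on ?B (U \<union> W - {j, w}))"
    using Suc.prems w w_Max by (intro haf_on_expand_Max) auto
  also have "\<dots> = (\<Sum>j\<in>U. ?B j w * haf_on ?B (U \<union> W - {j, w}))
                + (\<Sum>j\<in>W - {w}. ?B j w * haf_on ?B (U \<union> W - {j, w}))"
  proof -
    have "U \<union> W - {w} = U \<union> (W - {w})" "U \<inter> (W - {w}) = {}" using disj w by blast+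
    then show ?thesis using Suc.prems(1,3) by (simp add: sum.union_disjoint)
  qed
  also have "(\<Sum>j\<in>W - {w}. ?B j w * haf_on ?B (U \<union> W - {j, w})) = 0"
    using Suc.prems(4) w by (intro sum.neutral) (auto simp: block_Ak_def)
  also have "(\<Sum>j\<in>U. ?B j w * haf_on ?B (U \<union> W - {j, w}))
           = (\<Sum>j\<in>U. haf_on ?B ((U - {j}) \<union> (W - {w})))"
  proof (rule sum.cong[OF refl])
    fix j assume "j \<in> U"
    then have "?B j w = 1" using Suc.prems(2) w by (auto simp: block_Ak_def)
    moreover have "U \<union> W - {j, w} = (U - {j}) \<union> (W - {w})" using \<open>j \<in> U\<close> disj w by blast
    ultimately show "?B j w * haf_on ?B (U \<union> W - {j, w}) = haf_on ?B ((U - {j}) \<union> (W - {w}))"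
      by simp
  qed
  also have "\<dots> = (\<Sum>j\<in>U. fact n * (\<Sum>\<alpha> | \<alpha> \<subseteq> U - {j} \<and> card \<alpha> = card U - Suc n. haf_on A \<alpha>))"
  proof (rule sum.cong[OF refl])
    fix j assume "j \<in> U"
    have "card (W - {w}) = n" "card (U - {j}) = card U - 1"
      using Suc.hyps(2) Suc.prems \<open>j \<in> U\<close> w by simp_all
    with Suc.hyps(1)[of "W - {w}" "U - {j}"] Suc.hyps(2) Suc.prems
    show "haf_on ?B ((U - {j}) \<union> (W - {w}))
        = fact n * (\<Sum>\<alpha> | \<alpha> \<subseteq> U - {j} \<and> card \<alpha> = card U - Suc n. haf_on A \<alpha>)"
      by (simp add: subset_eq)
  qed
  also have "\<dots> = fact (Suc n) * (\<Sum>\<alpha> | \<alpha> \<subseteq> U \<and> card \<alpha> = card U - Suc n. haf_on A \<alpha>)"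
  proof -
    have "card U - (card U - Suc n) = Suc n" using Suc.hyps(2) Suc.prems(5) by simp
    then show ?thesis using Suc.prems(1)
      by (simp add: sum_subsets_Diff_singleton fact_Suc algebra_simps flip: sum_distrib_left)
  qed
  finally show ?case using Suc.hyps(2) by simp
qed

theorem theorem3p1:
  fixes m k :: nat and A :: "nat \<Rightarrow> nat \<Rightarrow> real"
  assumes "m \<ge> 2"
    and "\<forall>i\<in>{1..m}. \<forall>j\<in>{1..m}. A i j = A j i"
    and "\<forall>i\<in>{1..m}. A i i = 0"
    and "\<forall>i\<in>{1..m}. \<forall>j\<in>{1..m}. A i j \<ge> 0"
    and "1 \<le> k" and "k \<le> m div 2"
  shows "haf_k m k A = haf (2 * m - 2 * k) (block_Ak m A) / fact (m - 2 * k)"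
proof -
  txt \<open>Only entries \<open>A i j\<close> with \<open>i < j\<close> enter a hafnian.\<close>
  have "2 * k \<le> m" using assms(6) by simp
  have "haf_k m k A = (\<Sum>\<alpha> | \<alpha> \<subseteq> {1..m} \<and> card \<alpha> = 2 * k. haf_on A \<alpha>)"
    unfolding haf_k_def Q_sets_def
    by (intro sum.cong refl)
      (metis (mono_tags) haf_principal_submatrix finite_atLeastAtMost finite_subset mem_Collect_eq)
  also have "\<dots> = haf_on (block_Ak m A) ({1..m} \<union> {m<..2 * m - 2 * k}) / fact (m - 2 * k)"
    using haf_on_block_Ak[of "{1..m}" m "{m<..2 * m - 2 * k}" A] \<open>2 * k \<le> m\<close>
    by (simp add: subset_eq)
  also have "{1..m} \<union> {m<..2 * m - 2 * k} = {1..2 * m - 2 * k}"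
    using \<open>2 * k \<le> m\<close> by auto
  finally show ?thesis by (simp add: haf_eq_haf_on)
qed

end
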